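(* Consider the Maxwell--Bloch system \[ \dot A=B,\quad \dot B=-\Omega^2A-\sigma B+cj(t),\quad i\hbar\dot C_1=\hbar\omega_1C_1+ia(t)C_2,\quad i\hbar\dot C_2=\hbar\omega_2C_2-ia(t)C_1,\qquad t>0, \] with $j(t)=2q\,\mathrm{Im}[\overline{C_1(t)}C_2(t)]$, $a(t)=\frac qc[A(t)+A_p(t)]$, where $A_p\in C[0,\infty)$ is real-valued. Then there exist a quadratic function $V(A,B)$ on $\mathbb R^2$ and constants $a_1,a_2>0$ such that \[ a_1[A^2+B^2]\le V(A,B)\le a_2[A^2+B^2]\quad\text{for all }(A,B)\in\mathbb R^2, \] and constants $\gamma,D>0$ such that for every solution $(A(t),B(t),C_1(t),C_2(t))$ of the system with $|C_1(t)|^2+|C_2(t)|^2=1$, \[ \frac{d}{dt}V(A(t),B(t))\le-\gamma V(A(t),B(t))+D,\qquad t>0. \]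
   Context: Parameters: $\Omega>0$ (resonance frequency), $\sigma>0$ (dissipation), $c>0$, $\hbar>0$, real $\omega_2>\omega_1$, $p>0$, $\omega=\omega_2-\omega_1$, $q=\omega p$. Unknowns: $A(t),B(t)\in\mathbb R$, $C_1(t),C_2(t)\in\mathbb C$. The function $A_p$ (the pumping) is given. *)

theory Defs
  imports "HOL-Analysis.Analysis"
begin

definition quadratic_fun2 :: "(real \<Rightarrow> real \<Rightarrow> real) \<Rightarrow> bool" where
  "quadratic_fun2 V \<longleftrightarrow> (\<exists>k1 k2 k3 k4 k5 k6. \<forall>x y.
     V x y = k1 * x\<^sup>2 + k2 * x * y + k3 * y\<^sup>2 + k4 * x + k5 * y + k6)"

end

theory Submission
  imports Defs
begin

text \<open>Only the field equations and the normalisation of the Bloch vector matter: the latter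
  gives \<open>2 \<bar>Im (cnj C1 * C2)\<bar> \<le> 1\<close>, so the current \<open>j\<close> is a bounded forcing term of the damped
  oscillator \<open>A'' + \<sigma> A' + \<Omega>\<^sup>2 A = c j\<close>. For a damped oscillator the energy
  \<open>\<Omega>\<^sup>2 A\<^sup>2 + B\<^sup>2\<close> only dissipates \<open>\<sigma> B\<^sup>2\<close>; adding the cross term \<open>\<sigma> A B\<close> (and \<open>\<sigma>\<^sup>2 A\<^sup>2 / 2\<close> to
  keep it positive definite) yields a Lyapunov function whose derivative is
  \<open>-\<sigma> (\<Omega>\<^sup>2 A\<^sup>2 + B\<^sup>2) + (\<sigma> A + 2 B) c j\<close>. Young's inequality absorbs the forcing
  into half of the dissipation, up to a constant.\<close>

definition osc_lyap :: "real \<Rightarrow> real \<Rightarrow> real \<Rightarrow> real \<Rightarrow> real" where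
  "osc_lyap W s x y = (W + s\<^sup>2 / 2) * x\<^sup>2 + s * x * y + y\<^sup>2"

lemma quadratic_fun2_osc_lyap: "quadratic_fun2 (osc_lyap W s)"
  unfolding quadratic_fun2_def osc_lyap_def
  by (rule exI[of _ "W + s\<^sup>2 / 2"], rule exI[of _ s], rule exI[of _ 1],
      rule exI[of _ 0], rule exI[of _ 0], rule exI[of _ 0]) simp

lemma osc_lyap_lower:
  assumes "W \<ge> 0"
  shows "min W (1/2) * (x\<^sup>2 + y\<^sup>2) \<le> osc_lyap W s x y"
proof -
  have "W * x\<^sup>2 + y\<^sup>2 / 2 + (s * x + y)\<^sup>2 / 2 = osc_lyap W s x y"
    by (simp add: osc_lyap_def power2_eq_square field_simps)
  moreover have "min W (1/2) * x\<^sup>2 \<le> W * x\<^sup>2" "min W (1/2) * y\<^sup>2 \<le> 1/2 * y\<^sup>2"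
    by (rule mult_right_mono; simp)+
  moreover have "0 \<le> (s * x + y)\<^sup>2 / 2" by simp
  ultimately show ?thesis unfolding distrib_left by linarith
qed

lemma osc_lyap_upper:
  assumes "W \<ge> 0" "s \<ge> 0"
  shows "osc_lyap W s x y \<le> (W + s\<^sup>2 / 2 + s / 2 + 1) * (x\<^sup>2 + y\<^sup>2)"
proof -
  have "(W + s\<^sup>2 / 2 + s / 2 + 1) * (x\<^sup>2 + y\<^sup>2) - osc_lyap W s x y
      = s / 2 * (x - y)\<^sup>2 + (W + s\<^sup>2 / 2) * y\<^sup>2 + x\<^sup>2"
    by (simp add: osc_lyap_def power2_eq_square algebra_simps)
  moreover have "0 \<le> s / 2 * (x - y)\<^sup>2 + (W + s\<^sup>2 / 2) * y\<^sup>2 + x\<^sup>2"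
    using assms by simp
  ultimately show ?thesis by linarith
qed

lemma osc_lyap_deriv:
  assumes "(A has_real_derivative B t) (at t)"
    and "(B has_real_derivative - W * A t - s * B t + f) (at t)"
  shows "deriv (\<lambda>u. osc_lyap W s (A u) (B u)) t
    = - s * (W * (A t)\<^sup>2 + (B t)\<^sup>2) + (s * A t + 2 * B t) * f"
proof -
  have "((\<lambda>u. osc_lyap W s (A u) (B u)) has_real_derivative
      (W + s\<^sup>2 / 2) * (2 * A t * B t) + s * (B t * B t + A t * (- W * A t - s * B t + f))
        + 2 * B t * (- W * A t - s * B t + f)) (at t)"
    unfolding osc_lyap_def
    by (auto intro!: derivative_eq_intros assms simp: power2_eq_square algebra_simps)
  then show ?thesis
    by (simp add: DERIV_imp_deriv power2_eq_square algebra_simps)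
qed

text \<open>Young's inequality, applied to the two parts of the forcing term.\<close>

lemma forced_dissipation_le:
  fixes W s x y f F :: real
  assumes "W > 0" "s > 0" "\<bar>f\<bar> \<le> F"
  shows "- s * (W * x\<^sup>2 + y\<^sup>2) + (s * x + 2 * y) * f
    \<le> - s / 2 * (W * x\<^sup>2 + y\<^sup>2) + (s / (2 * W) + 2 / s) * F\<^sup>2"
proof -
  have "f\<^sup>2 \<le> F\<^sup>2"
    using assms(3) by (metis abs_ge_zero order_trans power2_abs power_mono)
  then have "s / (2 * W) * f\<^sup>2 + 2 / s * f\<^sup>2 \<le> s / (2 * W) * F\<^sup>2 + 2 / s * F\<^sup>2"
    using assms by (intro add_mono mult_left_mono) simp_all
  moreover have "0 \<le> s / (2 * W) * (W * x - f)\<^sup>2 + 2 / s * (s * y / 2 - f)\<^sup>2"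
    using assms by simp
  moreover have "s / (2 * W) * (W * x - f)\<^sup>2 + 2 / s * (s * y / 2 - f)\<^sup>2
      = s / 2 * (W * x\<^sup>2 + y\<^sup>2) - (s * x + 2 * y) * f + (s / (2 * W) * f\<^sup>2 + 2 / s * f\<^sup>2)"
    using assms by (simp add: power2_eq_square field_simps)
  ultimately show ?thesis by (simp add: algebra_simps)
qed

lemma osc_lyap_le_dissipation:
  assumes "W > 0" "s > 0"
  shows "s * min W 1 / (2 * (W + s\<^sup>2 / 2 + s / 2 + 1)) * osc_lyap W s x y
    \<le> s / 2 * (W * x\<^sup>2 + y\<^sup>2)"
proof -
  let ?a2 = "W + s\<^sup>2 / 2 + s / 2 + 1"
  have a2: "?a2 > 0" using assms by (simp add: add_pos_nonneg)
  have "s * min W 1 / (2 * ?a2) * osc_lyap W s x y \<le> s * min W 1 / (2 * ?a2) * (?a2 * (x\<^sup>2 + y\<^sup>2))"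
    using assms osc_lyap_upper[of W s x y] by (intro mult_left_mono) simp_all
  also have "\<dots> = s / 2 * (min W 1 * (x\<^sup>2 + y\<^sup>2))"
    using a2 by (simp add: field_simps)
  also have "\<dots> \<le> s / 2 * (W * x\<^sup>2 + 1 * y\<^sup>2)"
    unfolding distrib_left using assms
    by (intro mult_left_mono add_mono mult_right_mono) simp_all
  finally show ?thesis by simp
qed

lemma abs_Im_cnj_mult_le:
  fixes a b :: complex
  shows "2 * \<bar>Im (cnj a * b)\<bar> \<le> (cmod a)\<^sup>2 + (cmod b)\<^sup>2"
proof -
  have "\<bar>Im (cnj a * b)\<bar> \<le> cmod a * cmod b"
    using abs_Im_le_cmod[of "cnj a * b"] by (simp add: norm_mult)
  moreover have "0 \<le> (cmod a - cmod b)\<^sup>2" by simp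
  ultimately show ?thesis by (simp add: power2_eq_square algebra_simps)
qed

theorem lemma2p1:
  fixes \<Omega> \<sigma> c hbar \<omega>1 \<omega>2 p \<omega> q :: real
    and Ap :: "real \<Rightarrow> real"
  assumes "\<Omega> > 0" "\<sigma> > 0" "c > 0" "hbar > 0" "\<omega>2 > \<omega>1" "p > 0"
    and "\<omega> = \<omega>2 - \<omega>1" "q = \<omega> * p"
    and "continuous_on {0..} Ap"
  shows "\<exists>V a1 a2 \<gamma> D. quadratic_fun2 V \<and> a1 > 0 \<and> a2 > 0 \<and> \<gamma> > 0 \<and> D > 0 \<and>
    (\<forall>x y. a1 * (x\<^sup>2 + y\<^sup>2) \<le> V x y \<and> V x y \<le> a2 * (x\<^sup>2 + y\<^sup>2)) \<and>
    (\<forall>(A :: real \<Rightarrow> real) (B :: real \<Rightarrow> real) (C1 :: real \<Rightarrow> complex) (C2 :: real \<Rightarrow> complex).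
       (let j = (\<lambda>t. 2 * q * Im (cnj (C1 t) * C2 t));
            a = (\<lambda>t. q / c * (A t + Ap t))
        in (\<forall>t>0. (A has_real_derivative B t) (at t)
               \<and> (B has_real_derivative (- \<Omega>\<^sup>2 * A t - \<sigma> * B t + c * j t)) (at t)
               \<and> (\<exists>d1. (C1 has_vector_derivative d1) (at t) \<and>
                     \<i> * hbar * d1 = hbar * \<omega>1 * C1 t + \<i> * a t * C2 t)
               \<and> (\<exists>d2. (C2 has_vector_derivative d2) (at t) \<and>
                     \<i> * hbar * d2 = hbar * \<omega>2 * C2 t - \<i> * a t * C1 t)
               \<and> (cmod (C1 t))\<^sup>2 + (cmod (C2 t))\<^sup>2 = 1))
       \<longrightarrow> (\<forall>t>0. deriv (\<lambda>s. V (A s) (B s)) t \<le> - \<gamma> * V (A t) (B t) + D))"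
proof -
  define W where "W = \<Omega>\<^sup>2"
  define a2 where "a2 = W + \<sigma>\<^sup>2 / 2 + \<sigma> / 2 + 1"
  define \<gamma> where "\<gamma> = \<sigma> * min W 1 / (2 * a2)"
  define D where "D = (\<sigma> / (2 * W) + 2 / \<sigma>) * (c * q)\<^sup>2 + 1"
  have W: "W > 0" using assms(1) by (simp add: W_def)
  have "a2 > 0" using W assms(2) by (simp add: a2_def add_pos_nonneg)
  have dissipative: "deriv (\<lambda>u. osc_lyap W \<sigma> (A u) (B u)) t \<le> - \<gamma> * osc_lyap W \<sigma> (A t) (B t) + D"
    if "(A has_real_derivative B t) (at t)"
      and "(B has_real_derivative - W * A t - \<sigma> * B t + c * (2 * q * Im (cnj (C1 t) * C2 t))) (at t)"
      and "(cmod (C1 t))\<^sup>2 + (cmod (C2 t))\<^sup>2 = 1"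
    for A B :: "real \<Rightarrow> real" and C1 C2 :: "real \<Rightarrow> complex" and t :: real
  proof -
    have "\<bar>c * (2 * q * r)\<bar> \<le> c * \<bar>q\<bar>" if "2 * \<bar>r\<bar> \<le> 1" for r
      using mult_left_mono[OF that, of "c * \<bar>q\<bar>"] assms(3) by (simp add: abs_mult)
    then have forcing: "\<bar>c * (2 * q * Im (cnj (C1 t) * C2 t))\<bar> \<le> c * \<bar>q\<bar>"
      using abs_Im_cnj_mult_le[of "C1 t" "C2 t"] that(3) by auto
    have "deriv (\<lambda>u. osc_lyap W \<sigma> (A u) (B u)) t
        = - \<sigma> * (W * (A t)\<^sup>2 + (B t)\<^sup>2) + (\<sigma> * A t + 2 * B t) * (c * (2 * q * Im (cnj (C1 t) * C2 t)))"
      by (rule osc_lyap_deriv[OF that(1,2)])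
    also have "\<dots> \<le> - \<sigma> / 2 * (W * (A t)\<^sup>2 + (B t)\<^sup>2) + (\<sigma> / (2 * W) + 2 / \<sigma>) * (c * \<bar>q\<bar>)\<^sup>2"
      by (rule forced_dissipation_le[OF W assms(2) forcing])
    also have "\<dots> \<le> - \<gamma> * osc_lyap W \<sigma> (A t) (B t) + D"
      using osc_lyap_le_dissipation[OF W assms(2), of "A t" "B t"]
      by (simp add: D_def \<gamma>_def a2_def power_mult_distrib)
    finally show ?thesis .
  qed
  have bounds: "min W (1/2) * (x\<^sup>2 + y\<^sup>2) \<le> osc_lyap W \<sigma> x y \<and> osc_lyap W \<sigma> x y \<le> a2 * (x\<^sup>2 + y\<^sup>2)"
    for x y
    using osc_lyap_lower osc_lyap_upper W assms(2) by (simp add: a2_def)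
  have "min W (1/2) > 0" "\<gamma> > 0" "D > 0"
    using W assms(2) \<open>a2 > 0\<close> by (simp_all add: \<gamma>_def D_def add_nonneg_pos)
  then show ?thesis
    using quadratic_fun2_osc_lyap bounds \<open>a2 > 0\<close> dissipative[unfolded W_def]
    by (intro exI[of _ "osc_lyap W \<sigma>"] exI[of _ "min W (1/2)"] exI[of _ a2] exI[of _ \<gamma>] exI[of _ D])
      (auto simp: Let_def W_def)
qed

end
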